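(* Let $n\in\{2,6,10,\dots\}$ and let $P$ be a maximal increasing path of $f_{n+4}$ starting at the origin of $\{0,1\}^{n+4}$. Write vertices as $(\mathbf{x},y_1,y_2,y_3,y_4)$ with $\mathbf{x}\in\{0,1\}^n$, and let $\mathbf{0},\mathbf{1}\in\{0,1\}^n$ be the all-zeros and all-ones vectors. Then $P$ consists, in order, of: (i) an initial segment contained in $\{(\mathbf{x},0,0,0,0)\}$ whose projection to the first $n$ coordinates is an increasing path of $f_n$ from $\mathbf{0}$ to $\mathbf{1}$; (ii) the vertices $(\mathbf{1},1,0,0,0)$ and then $(\mathbf{1},1,1,0,0)$; (iii) $n$ steps, each changing one of the first $n$ coordinates from $1$ to $0$, ending at $(\mathbf{0},1,1,0,0)$; (iv) the vertices $(\mathbf{0},1,1,1,0)$ and then $(\mathbf{0},1,1,1,1)$; (v) a final segment contained in $\{(\mathbf{x},1,1,1,1)\}$ whose projection to the first $n$ coordinates is a maximal increasing path of $f_n$ starting at $\mathbf{0}$ (and hence, by induction, ending at $\mathbf{1}$).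
   Context: For $n\in\{2,6,10,\dots\}$ define polynomials $f_n$ in variables $x_1,\dots,x_n$ (evaluated on $\{0,1\}^n$) recursively. Set $f_2(x_1,x_2):=x_1+x_2$. For $n\in\{2,6,10,\dots\}$, write $\mathbf{x}=(x_1,\dots,x_n)$, $S:=\sum_{i=1}^n x_i$, let $M_n:=\max_{\{0,1\}^n} f_n-\min_{\{0,1\}^n} f_n+1$, and define $f_{n+4}(\mathbf{x},x_{n+1},x_{n+2},x_{n+3},x_{n+4}) := f_n(\mathbf{x}) - M_n n^2 x_{n+1} + M_n(n+1) S x_{n+1} - x_{n+2} - 2M_n n S x_{n+2} + 2M_n n(n+2) x_{n+1}x_{n+2} - 4 S x_{n+3} + 2x_{n+1}x_{n+3} + 2x_{n+2}x_{n+3} - 3x_{n+3} + (M_n(n-1)+4) S x_{n+4} + 6M_n n^2 x_{n+3}x_{n+4} - 5M_n n^2 x_{n+4}$. For a function $f:\{0,1\}^m\to\mathbb{R}$, an increasing path is a sequence of vertices $v_0,\dots,v_k$ of $\{0,1\}^m$ such that consecutive vertices differ in exactly one coordinate and $f(v_{j+1})>f(v_j)$ for all $j$. It is maximal if its last vertex is a local maximum (no neighbor has strictly larger value). *)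

theory Defs
  imports Main
begin

text \<open>Vertices of the cube {0,1}^m are integer lists of length m with entries in {0,1};
  coordinate x_i (1-based in the paper) is v ! (i-1).\<close>

definition cube :: "nat \<Rightarrow> int list set" where
  "cube m = {v. length v = m \<and> set v \<subseteq> {0, 1}}"

text \<open>fk k is the polynomial f_n for n = 4k+2, evaluated on vectors.\<close>
primrec fk :: "nat \<Rightarrow> int list \<Rightarrow> int" where
  "fk 0 = (\<lambda>v. v ! 0 + v ! 1)"
| "fk (Suc k) =
     (let g = fk k; nn = 4 * k + 2; n = int nn;
          M = Max (g ` cube nn) - Min (g ` cube nn) + 1
      in (\<lambda>v. let x = take nn v; S = sum_list x;
                  a = v ! nn; b = v ! (nn + 1); c = v ! (nn + 2); d = v ! (nn + 3)
              in g x - M * n^2 * a + M * (n + 1) * S * a - b - 2 * M * n * S * b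
                 + 2 * M * n * (n + 2) * a * b - 4 * S * c + 2 * a * c + 2 * b * c
                 - 3 * c + (M * (n - 1) + 4) * S * d + 6 * M * n^2 * c * d
                 - 5 * M * n^2 * d))"

definition f :: "nat \<Rightarrow> int list \<Rightarrow> int" where
  "f n = fk ((n - 2) div 4)"

definition adjacent :: "int list \<Rightarrow> int list \<Rightarrow> bool" where
  "adjacent u v \<longleftrightarrow> length u = length v \<and> card {i. i < length u \<and> u ! i \<noteq> v ! i} = 1"

definition increasing_path :: "(int list \<Rightarrow> int) \<Rightarrow> nat \<Rightarrow> int list list \<Rightarrow> bool" where
  "increasing_path g m P \<longleftrightarrow> P \<noteq> [] \<and> set P \<subseteq> cube m \<and>
     (\<forall>j. Suc j < length P \<longrightarrow> adjacent (P ! j) (P ! Suc j) \<and> g (P ! j) < g (P ! Suc j))"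

definition local_max :: "(int list \<Rightarrow> int) \<Rightarrow> nat \<Rightarrow> int list \<Rightarrow> bool" where
  "local_max g m v \<longleftrightarrow> v \<in> cube m \<and> (\<forall>w \<in> cube m. adjacent v w \<longrightarrow> \<not> g v < g w)"

definition maximal_increasing_path :: "(int list \<Rightarrow> int) \<Rightarrow> nat \<Rightarrow> int list list \<Rightarrow> bool" where
  "maximal_increasing_path g m P \<longleftrightarrow> increasing_path g m P \<and> local_max g m (last P)"

end

theory Submission
  imports Defs
begin

text \<open>
  Fix x in {0,1}^n and put G = f_n(x), S = x_1 + ... + x_n.  For each fixed tail (a,b,c,d) the
  value f_{n+4}(x,a,b,c,d) is an affine function of (G,S), and M_n exceeds every difference of
  two values of f_n.  Comparing neighbours tail by tail along 0000, 1000, 1100, 1110, 1111 shows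
  that the increasing moves are: in 0000 and 1111 exactly the increasing moves of f_n; from 0000
  additionally (1,0000) -> (1,1000), and from there only (1,1100); in 1100 exactly the moves
  turning a 1 of x into a 0 (the slope in S is -M_n (n-1)), plus (0,1100) -> (0,1110); from
  (0,1110) only (0,1111).  Hence an increasing path from the origin is forced through these
  stages, unless it stops in 0000 at a local maximum of f_n other than 1.  That is excluded by
  induction on n: by this very structure, a maximal increasing path of f_{n+4} from 0 ends with a
  maximal increasing path of f_n from 0 in the layer 1111, so it ends at 1 whenever those of f_n
  do.
\<close>

lemma finite_cube: "finite (cube m)"
proof (rule finite_subset)
  show "cube m \<subseteq> {xs. set xs \<subseteq> {0, 1} \<and> length xs = m}" by (auto simp: cube_def)
qed (rule finite_lists_length_eq, simp)

lemma replicate_in_cube [simp]: "replicate m 0 \<in> cube m" "replicate m 1 \<in> cube m"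
  by (auto simp: cube_def)

lemma length_cube: "x \<in> cube m \<Longrightarrow> length x = m"
  by (simp add: cube_def)

lemma cube_nth_cases: "x \<in> cube m \<Longrightarrow> i < m \<Longrightarrow> x ! i = 0 \<or> x ! i = 1"
  unfolding cube_def using nth_mem by fastforce

lemma append_in_cube_iff: "length x = n \<Longrightarrow> x @ t \<in> cube (n + l) \<longleftrightarrow> x \<in> cube n \<and> t \<in> cube l"
  by (auto simp: cube_def)

lemma sum_list_cube_bounds: "x \<in> cube m \<Longrightarrow> 0 \<le> sum_list x \<and> sum_list x \<le> int m"
  unfolding cube_def by (induction x arbitrary: m) auto

lemma cube_sum_list_eq_0_iff: "x \<in> cube m \<Longrightarrow> sum_list x = 0 \<longleftrightarrow> x = replicate m 0"
proof (induction x arbitrary: m)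
  case (Cons a x)
  then show ?case
    using sum_list_cube_bounds[of x "m - 1"] by (auto simp: cube_def)
qed (simp add: cube_def)

lemma cube_sum_list_eq_length_iff: "x \<in> cube m \<Longrightarrow> sum_list x = int m \<longleftrightarrow> x = replicate m 1"
proof (induction x arbitrary: m)
  case (Cons a x)
  then show ?case
    using sum_list_cube_bounds[of x "m - 1"] by (auto simp: cube_def)
qed (simp add: cube_def)

lemma cube_nonzero: "x \<in> cube m \<Longrightarrow> x \<noteq> replicate m 0 \<Longrightarrow> \<exists>i<m. x ! i = 1"
  using cube_nth_cases[of x m] by (fastforce simp: length_cube intro: nth_equalityI)

definition flip :: "int list \<Rightarrow> nat \<Rightarrow> int list" where
  "flip u i = u[i := 1 - u ! i]"

lemma length_flip [simp]: "length (flip u i) = length u"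
  by (simp add: flip_def)

lemma flip_one: "x ! i = 1 \<Longrightarrow> flip x i = x[i := 0]"
  by (simp add: flip_def)

lemma flip_in_cube: "u \<in> cube m \<Longrightarrow> i < m \<Longrightarrow> flip u i \<in> cube m"
  using cube_nth_cases[of u m i]
  by (auto simp: cube_def flip_def dest: set_update_subset_insert[THEN subsetD])

lemma flip_append:
  "flip (x @ t) i = (if i < length x then flip x i @ t else x @ flip t (i - length x))"
  by (simp add: flip_def list_update_append nth_append)

lemma sum_list_flip: "i < length u \<Longrightarrow> sum_list (flip u i) = sum_list u + 1 - 2 * u ! i"
  unfolding flip_def by (induction u arbitrary: i) (auto split: nat.split)

lemma adjacent_flip: "i < length u \<Longrightarrow> adjacent u (flip u i)"
proof -
  assume i: "i < length u"
  have "u ! i \<noteq> 1 - u ! i" by arith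
  then have "{j. j < length u \<and> u ! j \<noteq> flip u i ! j} = {i}"
    using i by (auto simp: flip_def nth_list_update)
  then show ?thesis by (simp add: adjacent_def)
qed

lemma adjacent_imp_flip:
  assumes u: "u \<in> cube m" and w: "w \<in> cube m" and "adjacent u w"
  shows "\<exists>i<m. w = flip u i"
proof -
  have len: "length u = m" "length w = m" using u w by (simp_all add: length_cube)
  have "card {j. j < m \<and> u ! j \<noteq> w ! j} = 1"
    using \<open>adjacent u w\<close> len by (simp add: adjacent_def)
  then obtain i where I: "{j. j < m \<and> u ! j \<noteq> w ! j} = {i}"
    by (rule card_1_singletonE)
  then have i: "i < m" "u ! i \<noteq> w ! i" by auto
  have "w ! j = flip u i ! j" if "j < m" for j
  proof (cases "j = i")
    case True
    then show ?thesis
      using i cube_nth_cases[OF u i(1)] cube_nth_cases[OF w i(1)] len by (auto simp: flip_def)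
  next
    case False
    then have "u ! j = w ! j" using I that by blast
    then show ?thesis using False by (simp add: flip_def)
  qed
  then have "w = flip u i" using len by (intro nth_equalityI) auto
  with i show ?thesis by blast
qed

definition up_step :: "(int list \<Rightarrow> int) \<Rightarrow> nat \<Rightarrow> int list \<Rightarrow> int list \<Rightarrow> bool" where
  "up_step F m u w \<longleftrightarrow> u \<in> cube m \<and> w \<in> cube m \<and> adjacent u w \<and> F u < F w"

lemma up_step_iff_flip: "up_step F m u w \<longleftrightarrow> u \<in> cube m \<and> (\<exists>i<m. w = flip u i) \<and> F u < F w"
proof
  assume "up_step F m u w"
  then show "u \<in> cube m \<and> (\<exists>i<m. w = flip u i) \<and> F u < F w"
    using adjacent_imp_flip by (auto simp: up_step_def)
next
  assume "u \<in> cube m \<and> (\<exists>i<m. w = flip u i) \<and> F u < F w"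
  then show "up_step F m u w"
    using adjacent_flip flip_in_cube length_cube by (fastforce simp: up_step_def)
qed

lemma up_step_append:
  assumes x: "x \<in> cube n" and t: "t \<in> cube l"
  shows "up_step F (n + l) (x @ t) w \<longleftrightarrow>
    ((\<exists>i<n. w = flip x i @ t) \<or> (\<exists>j<l. w = x @ flip t j)) \<and> F (x @ t) < F w"
proof -
  have len: "length x = n" "length t = l" using x t by (simp_all add: length_cube)
  have "(\<exists>i<n + l. Q i) \<longleftrightarrow> (\<exists>i<n. Q i) \<or> (\<exists>j<l. Q (n + j))" for Q
    by (metis add_less_cancel_left le_add_diff_inverse not_less trans_less_add1)
  then have "(\<exists>i<n + l. w = flip (x @ t) i) \<longleftrightarrow> (\<exists>i<n. w = flip x i @ t) \<or> (\<exists>j<l. w = x @ flip t j)"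
    using len by (auto simp: flip_append)
  then show ?thesis
    using x t len by (simp add: up_step_iff_flip append_in_cube_iff)
qed

lemma up_step_append4:
  assumes "x \<in> cube n" and "set [a, b, c, d] \<subseteq> {0, 1}"
  shows "up_step F (n + 4) (x @ [a, b, c, d]) w \<longleftrightarrow>
    ((\<exists>i<n. w = flip x i @ [a, b, c, d]) \<or>
     w \<in> {x @ [1 - a, b, c, d], x @ [a, 1 - b, c, d], x @ [a, b, 1 - c, d], x @ [a, b, c, 1 - d]})
    \<and> F (x @ [a, b, c, d]) < F w"
proof -
  have "(\<exists>j<4. P j) \<longleftrightarrow> P 0 \<or> P 1 \<or> P 2 \<or> P 3" for P :: "nat \<Rightarrow> bool"
    by (auto simp: less_Suc_eq numeral_eq_Suc)
  then show ?thesis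
    using assms by (simp add: up_step_append cube_def flip_def)
qed

lemma local_max_iff: "local_max F m u \<longleftrightarrow> u \<in> cube m \<and> (\<forall>w. \<not> up_step F m u w)"
  by (auto simp: local_max_def up_step_def)

lemma successively_iff_nth: "successively R xs \<longleftrightarrow> (\<forall>j < length xs - 1. R (xs ! j) (xs ! Suc j))"
  by (induction xs rule: induct_list012) (simp_all add: All_less_Suc2)

lemma increasing_path_iff_successively:
  "increasing_path F m P \<longleftrightarrow> P \<noteq> [] \<and> set P \<subseteq> cube m \<and> successively (up_step F m) P"
  unfolding increasing_path_def successively_iff_nth up_step_def
  by (auto simp: less_diff_conv)

lemma increasing_path_Cons_Cons:
  "increasing_path F m (u # w # Q) \<longleftrightarrow> up_step F m u w \<and> increasing_path F m (w # Q)"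
  by (auto simp: increasing_path_iff_successively up_step_def)

lemma maximal_increasing_path_singleton [simp]:
  "maximal_increasing_path F m [u] \<longleftrightarrow> local_max F m u"
  by (simp add: maximal_increasing_path_def increasing_path_def local_max_def)

lemma maximal_increasing_path_Cons_Cons:
  "maximal_increasing_path F m (u # w # Q) \<longleftrightarrow> up_step F m u w \<and> maximal_increasing_path F m (w # Q)"
  by (simp add: maximal_increasing_path_def increasing_path_Cons_Cons)

lemma maximal_increasing_path_forced_step:
  assumes P: "maximal_increasing_path F m (u # Q)" and up: "up_step F m u v"
    and unique: "\<And>w. up_step F m u w \<Longrightarrow> w = v"
  obtains Q' where "Q = v # Q'" "maximal_increasing_path F m (v # Q')"
proof (cases Q)
  case Nil
  then show ?thesis using P up by (simp add: local_max_iff)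
next
  case (Cons w Q')
  with P have "up_step F m u w" "maximal_increasing_path F m (w # Q')"
    by (simp_all add: maximal_increasing_path_Cons_Cons)
  with unique Cons that show ?thesis by blast
qed

lemma maximal_increasing_path_layer_cases:
  assumes step: "\<forall>x\<in>X. \<forall>w. up_step F m (e x) w \<longrightarrow> (\<exists>y\<in>X. w = e y \<and> R x y) \<or> (x, w) \<in> Exit"
    and "maximal_increasing_path F m (e x # Q)" and "x \<in> X"
  shows "(\<exists>A. e x # Q = map e A \<and> hd A = x \<and> set A \<subseteq> X \<and> successively R A
             \<and> local_max F m (e (last A)))
       \<or> (\<exists>A v Q'. e x # Q = map e A @ v # Q' \<and> A \<noteq> [] \<and> hd A = x \<and> set A \<subseteq> X \<and> successively R A
             \<and> (last A, v) \<in> Exit \<and> maximal_increasing_path F m (v # Q'))"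
  using assms(2,3)
proof (induction Q arbitrary: x)
  case Nil
  then show ?case by (intro disjI1 exI[of _ "[x]"]) simp
next
  case (Cons w Q)
  then have up: "up_step F m (e x) w" and rest: "maximal_increasing_path F m (w # Q)"
    by (simp_all add: maximal_increasing_path_Cons_Cons)
  from step \<open>x \<in> X\<close> up have "(\<exists>y\<in>X. w = e y \<and> R x y) \<or> (x, w) \<in> Exit" by blast
  then show ?case
  proof (elim disjE bexE conjE)
    fix y assume y: "y \<in> X" "w = e y" "R x y"
    have extend: "successively R (x # A)" if "successively R A" "hd A = y" "A \<noteq> []" for A
      using that y(3) by (cases A) auto
    from Cons.IH[OF rest[unfolded y(2)] y(1)] show ?case
    proof (elim disjE exE conjE)
      fix A assume A: "e y # Q = map e A" "hd A = y" "set A \<subseteq> X" "successively R A"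
        "local_max F m (e (last A))"
      then have "A \<noteq> []" by auto
      then show ?case
        using A extend Cons.prems(2) y(2) by (intro disjI1 exI[of _ "x # A"]) auto
    next
      fix A v Q' assume A: "e y # Q = map e A @ v # Q'" "A \<noteq> []" "hd A = y" "set A \<subseteq> X"
        "successively R A" "(last A, v) \<in> Exit" "maximal_increasing_path F m (v # Q')"
      then show ?case
        using extend Cons.prems(2) y(2) by (intro disjI2 exI[of _ "x # A"] exI[of _ v] exI[of _ Q']) auto
    qed
  next
    assume "(x, w) \<in> Exit"
    then show ?case
      using rest Cons.prems(2) by (intro disjI2 exI[of _ "[x]"] exI[of _ w] exI[of _ Q]) auto
  qed
qed

definition lower_step :: "int list \<Rightarrow> int list \<Rightarrow> bool" where
  "lower_step x y \<longleftrightarrow> (\<exists>i < length x. x ! i = 1 \<and> y = x[i := 0])"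

lemma sum_list_successively_lower_step:
  "successively lower_step C \<Longrightarrow> C \<noteq> [] \<Longrightarrow> sum_list (hd C) = sum_list (last C) + int (length C - 1)"
proof (induction C rule: induct_list012)
  case (3 x y C)
  obtain i where "i < length x" "x ! i = 1" "y = x[i := 0]"
    using "3.prems" by (auto simp: lower_step_def)
  then have "sum_list x = sum_list y + 1"
    using sum_list_flip[of i x] by (simp add: flip_def)
  then show ?case using 3 by simp
qed simp_all

section \<open>The polynomial of the recursion step\<close>

text \<open>\<open>gadget M n G S a b c d\<close> is f_{n+4}(x,a,b,c,d) with G = f_n(x), S = sum x and M = M_n.\<close>

definition gadget :: "int \<Rightarrow> int \<Rightarrow> int \<Rightarrow> int \<Rightarrow> int \<Rightarrow> int \<Rightarrow> int \<Rightarrow> int \<Rightarrow> int" where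
  "gadget M n G S a b c d = G - M * n^2 * a + M * (n + 1) * S * a - b - 2 * M * n * S * b
     + 2 * M * n * (n + 2) * a * b - 4 * S * c + 2 * a * c + 2 * b * c
     - 3 * c + (M * (n - 1) + 4) * S * d + 6 * M * n^2 * c * d - 5 * M * n^2 * d"

definition gadget_slope :: "int \<Rightarrow> int \<Rightarrow> int \<Rightarrow> int \<Rightarrow> int \<Rightarrow> int \<Rightarrow> int" where
  "gadget_slope M n a b c d = M * (n + 1) * a - 2 * M * n * b - 4 * c + (M * (n - 1) + 4) * d"

lemma gadget_affine:
  "gadget M n G' S' a b c d = gadget M n G S a b c d + (G' - G) + (S' - S) * gadget_slope M n a b c d"
  by (simp add: gadget_def gadget_slope_def algebra_simps)

lemma gadget_slope_table:
  "gadget_slope M n 0 0 0 0 = 0"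
  "gadget_slope M n 1 0 0 0 = M * n + M"
  "gadget_slope M n 1 1 0 0 = M - M * n"
  "gadget_slope M n 1 1 1 0 = M - M * n - 4"
  "gadget_slope M n 1 1 1 1 = 0"
  by (simp_all add: gadget_slope_def algebra_simps)

text \<open>The monomials M n n, M n S, M S and M n are kept as atoms, so that the comparisons below
  become linear.\<close>

lemma gadget_table:
  "gadget M n G S 0 0 0 0 = G"
  "gadget M n G S 1 0 0 0 = G - M * n * n + M * n * S + M * S"
  "gadget M n G S 0 1 0 0 = G - 2 * (M * n * S) - 1"
  "gadget M n G S 0 0 1 0 = G - 4 * S - 3"
  "gadget M n G S 0 0 0 1 = G - 5 * (M * n * n) + M * n * S - M * S + 4 * S"
  "gadget M n G S 1 1 0 0 = G + M * n * n - M * n * S + M * S + 4 * (M * n) - 1"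
  "gadget M n G S 1 0 1 0 = G - M * n * n + M * n * S + M * S - 4 * S - 1"
  "gadget M n G S 1 0 0 1 = G - 6 * (M * n * n) + 2 * (M * n * S) + 4 * S"
  "gadget M n G S 0 1 1 0 = G - 2 * (M * n * S) - 4 * S - 2"
  "gadget M n G S 1 1 1 0 = G + M * n * n - M * n * S + M * S + 4 * (M * n) - 4 * S"
  "gadget M n G S 1 1 0 1 = G - 4 * (M * n * n) + 4 * (M * n) + 4 * S - 1"
  "gadget M n G S 0 1 1 1 = G + M * n * n - M * n * S - M * S - 2"
  "gadget M n G S 1 0 1 1 = G + 2 * (M * n * S) - 1"
  "gadget M n G S 1 1 1 1 = G + 2 * (M * n * n) + 4 * (M * n)"
  by (simp_all add: gadget_def algebra_simps power2_eq_square)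

lemma gadget_monomial_bounds:
  fixes M n S :: int
  assumes "2 \<le> n" "1 \<le> M" "0 \<le> S" "S \<le> n"
  shows "0 \<le> M * S" "M * S \<le> M * n" "0 \<le> M * n * S" "M * n * S \<le> M * n * n"
    "2 * M \<le> M * n" "2 * (M * n) \<le> M * n * n" "S \<le> M * S" "n \<le> M * n"
    "S < n \<Longrightarrow> M * S + M \<le> M * n" "S < n \<Longrightarrow> M * n * S + M * n \<le> M * n * n"
proof -
  have "1 * S \<le> M * S" "1 * n \<le> M * n" using assms by (intro mult_right_mono; simp)+
  then show "S \<le> M * S" "n \<le> M * n" by simp_all
  show "S < n \<Longrightarrow> M * S + M \<le> M * n" "S < n \<Longrightarrow> M * n * S + M * n \<le> M * n * n"
    using assms mult_left_mono[of "S + 1" n M] mult_left_mono[of "S + 1" n "M * n"]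
    by (simp_all add: algebra_simps)
qed (use assms in \<open>auto intro: mult_left_mono mult_right_mono\<close>)

lemma gadget_layer0:
  assumes "2 \<le> n" "1 \<le> M" "0 \<le> S" "S \<le> n"
  shows "gadget M n G S 0 0 0 0 < gadget M n G S 1 0 0 0 \<longleftrightarrow> S = n"
    and "gadget M n G S 0 1 0 0 < gadget M n G S 0 0 0 0"
    and "gadget M n G S 0 0 1 0 < gadget M n G S 0 0 0 0"
    and "gadget M n G S 0 0 0 1 < gadget M n G S 0 0 0 0"
proof -
  note bounds = gadget_monomial_bounds[OF assms]
  show "gadget M n G S 0 0 0 0 < gadget M n G S 1 0 0 0 \<longleftrightarrow> S = n"
  proof
    show "S = n" if "gadget M n G S 0 0 0 0 < gadget M n G S 1 0 0 0"
    proof (rule ccontr)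
      assume "S \<noteq> n"
      with assms(4) have "S < n" by simp
      with that assms(2) bounds(9,10)[OF this] show False unfolding gadget_table by linarith
    qed
    show "gadget M n G S 0 0 0 0 < gadget M n G S 1 0 0 0" if "S = n"
      using that assms(1) bounds(8) unfolding gadget_table by simp
  qed
qed (use assms gadget_monomial_bounds[OF assms] in \<open>unfold gadget_table; linarith\<close>)+

lemma gadget_layer1:
  assumes "2 \<le> n" "1 \<le> M" "S = n"
  shows "gadget M n G S 0 0 0 0 < gadget M n G S 1 0 0 0"
    and "gadget M n G S 1 0 1 0 < gadget M n G S 1 0 0 0"
    and "gadget M n G S 1 0 0 1 < gadget M n G S 1 0 0 0"
    and "gadget M n G S 1 0 0 0 < gadget M n G S 1 1 0 0"
proof -
  have "0 \<le> S" "S \<le> n" "M * n * S = M * n * n" "M * S = M * n" using assms by simp_all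
  note facts = this assms gadget_monomial_bounds(1-8)[OF assms(1,2) this(1,2)]
  show "gadget M n G S 0 0 0 0 < gadget M n G S 1 0 0 0" using facts unfolding gadget_table by linarith
  show "gadget M n G S 1 0 1 0 < gadget M n G S 1 0 0 0" using facts unfolding gadget_table by linarith
  show "gadget M n G S 1 0 0 1 < gadget M n G S 1 0 0 0" using facts unfolding gadget_table by linarith
  show "gadget M n G S 1 0 0 0 < gadget M n G S 1 1 0 0" using facts unfolding gadget_table by linarith
qed

lemma gadget_layer2:
  assumes "2 \<le> n" "1 \<le> M" "0 \<le> S" "S \<le> n"
  shows "gadget M n G S 0 1 0 0 < gadget M n G S 1 1 0 0"
    and "gadget M n G S 1 0 0 0 < gadget M n G S 1 1 0 0"
    and "gadget M n G S 1 1 0 1 < gadget M n G S 1 1 0 0"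
    and "gadget M n G S 1 1 0 0 < gadget M n G S 1 1 1 0 \<longleftrightarrow> S = 0"
proof -
  show "gadget M n G S 1 1 0 0 < gadget M n G S 1 1 1 0 \<longleftrightarrow> S = 0"
    using assms(3) unfolding gadget_table by auto
qed (use assms gadget_monomial_bounds(1-8)[OF assms] in \<open>unfold gadget_table; linarith\<close>)+

lemma gadget_layer3:
  assumes "2 \<le> n" "1 \<le> M" "S = 0"
  shows "gadget M n G S 0 1 1 0 < gadget M n G S 1 1 1 0"
    and "gadget M n G S 1 0 1 0 < gadget M n G S 1 1 1 0"
    and "gadget M n G S 1 1 0 0 < gadget M n G S 1 1 1 0"
    and "gadget M n G S 1 1 1 0 < gadget M n G S 1 1 1 1"
proof -
  have "0 \<le> S" "S \<le> n" "M * n * S = 0" "M * S = 0" using assms by simp_all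
  note facts = this assms gadget_monomial_bounds(1-8)[OF assms(1,2) this(1,2)]
  show "gadget M n G S 0 1 1 0 < gadget M n G S 1 1 1 0" using facts unfolding gadget_table by linarith
  show "gadget M n G S 1 0 1 0 < gadget M n G S 1 1 1 0" using facts unfolding gadget_table by linarith
  show "gadget M n G S 1 1 0 0 < gadget M n G S 1 1 1 0" using facts unfolding gadget_table by linarith
  show "gadget M n G S 1 1 1 0 < gadget M n G S 1 1 1 1" using facts unfolding gadget_table by linarith
qed

lemma gadget_layer4:
  assumes "2 \<le> n" "1 \<le> M" "0 \<le> S" "S \<le> n"
  shows "gadget M n G S 0 1 1 1 < gadget M n G S 1 1 1 1"
    and "gadget M n G S 1 0 1 1 < gadget M n G S 1 1 1 1"
    and "gadget M n G S 1 1 0 1 < gadget M n G S 1 1 1 1"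
    and "gadget M n G S 1 1 1 0 < gadget M n G S 1 1 1 1"
  using assms gadget_monomial_bounds(1-8)[OF assms] unfolding gadget_table by linarith+

section \<open>The layers of f_{n+4}\<close>

text \<open>\<open>fk_span k\<close> is M_n for n = 4k + 2.\<close>

definition fk_span :: "nat \<Rightarrow> int" where
  "fk_span k = Max (fk k ` cube (4 * k + 2)) - Min (fk k ` cube (4 * k + 2)) + 1"

declare fk.simps(2) [simp del]

locale fk_step =
  fixes k n :: nat
  assumes n_eq: "n = 4 * k + 2"
begin

abbreviation g :: "int list \<Rightarrow> int" where "g \<equiv> fk k"
abbreviation F :: "int list \<Rightarrow> int" where "F \<equiv> fk (Suc k)"
abbreviation M :: int where "M \<equiv> fk_span k"
abbreviation zeros :: "int list" where "zeros \<equiv> replicate n 0"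
abbreviation ones :: "int list" where "ones \<equiv> replicate n 1"

lemma F_append:
  "x \<in> cube n \<Longrightarrow> F (x @ [a, b, c, d]) = gadget M (int n) (g x) (sum_list x) a b c d"
  by (simp add: fk.simps(2) n_eq Let_def gadget_def nth_append length_cube fk_span_def)

lemma g_diff_less_span: "x \<in> cube n \<Longrightarrow> y \<in> cube n \<Longrightarrow> g y - g x < M"
proof -
  assume "x \<in> cube n" "y \<in> cube n"
  then have "g y \<le> Max (g ` cube n)" "Min (g ` cube n) \<le> g x"
    using finite_cube by (auto intro: Max_ge Min_le)
  then show ?thesis by (simp add: n_eq fk_span_def)
qed

lemma layer_bounds:
  assumes "x \<in> cube n"
  shows "2 \<le> int n" "1 \<le> M" "0 \<le> sum_list x" "sum_list x \<le> int n"
  using g_diff_less_span[OF assms assms] sum_list_cube_bounds[OF assms] n_eq by simp_all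

lemma F_flip_append:
  assumes x: "x \<in> cube n" and i: "i < n"
  shows "x ! i = 0 \<Longrightarrow> F (flip x i @ [a, b, c, d]) =
      F (x @ [a, b, c, d]) + (g (flip x i) - g x) + gadget_slope M (int n) a b c d"
    and "x ! i = 1 \<Longrightarrow> F (flip x i @ [a, b, c, d]) =
      F (x @ [a, b, c, d]) + (g (flip x i) - g x) - gadget_slope M (int n) a b c d"
proof -
  have "sum_list (flip x i) - sum_list x = 1 - 2 * x ! i"
    using sum_list_flip i length_cube[OF x] by simp
  then have "F (flip x i @ [a, b, c, d]) =
      F (x @ [a, b, c, d]) + (g (flip x i) - g x) + (1 - 2 * x ! i) * gadget_slope M (int n) a b c d"
    unfolding F_append[OF x] F_append[OF flip_in_cube[OF x i]]
    using gadget_affine[of M "int n" "g (flip x i)" "sum_list (flip x i)" a b c d "g x" "sum_list x"]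
    by simp
  then show "x ! i = 0 \<Longrightarrow> F (flip x i @ [a, b, c, d]) =
      F (x @ [a, b, c, d]) + (g (flip x i) - g x) + gadget_slope M (int n) a b c d"
    and "x ! i = 1 \<Longrightarrow> F (flip x i @ [a, b, c, d]) =
      F (x @ [a, b, c, d]) + (g (flip x i) - g x) - gadget_slope M (int n) a b c d"
    by simp_all
qed

lemma up_step_layer0:
  assumes x: "x \<in> cube n"
  shows "up_step F (n + 4) (x @ [0, 0, 0, 0]) w \<longleftrightarrow>
    (\<exists>y. w = y @ [0, 0, 0, 0] \<and> up_step g n x y) \<or> (x = ones \<and> w = ones @ [1, 0, 0, 0])"
proof -
  note arith = gadget_layer0[OF layer_bounds[OF x]]
  have flip_up: "F (x @ [0, 0, 0, 0]) < F (flip x i @ [0, 0, 0, 0]) \<longleftrightarrow> g x < g (flip x i)"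
    if "i < n" for i
    using F_flip_append[OF x that, of 0 0 0 0] cube_nth_cases[OF x that]
    unfolding gadget_slope_table by auto
  have exit_up: "F (x @ [0, 0, 0, 0]) < F (x @ [1, 0, 0, 0]) \<longleftrightarrow> x = ones"
    using arith(1) cube_sum_list_eq_length_iff[OF x] unfolding F_append[OF x] by simp
  have "\<not> F (x @ [0, 0, 0, 0]) < F (x @ [0, 1, 0, 0])" "\<not> F (x @ [0, 0, 0, 0]) < F (x @ [0, 0, 1, 0])"
    "\<not> F (x @ [0, 0, 0, 0]) < F (x @ [0, 0, 0, 1])"
    using arith(2-4) unfolding F_append[OF x] by (simp_all add: not_less less_imp_le)
  then show ?thesis
    using x flip_up exit_up by (subst up_step_append4[OF x]) (auto simp: up_step_iff_flip)
qed

lemma up_step_layer1: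
  "up_step F (n + 4) (ones @ [1, 0, 0, 0]) w \<longleftrightarrow> w = ones @ [1, 1, 0, 0]"
proof -
  have x: "ones \<in> cube n" by (rule replicate_in_cube)
  have "sum_list ones = int n" by (simp add: sum_list_replicate)
  note arith = gadget_layer1[OF layer_bounds(1,2)[OF x] this]
  have "\<not> F (ones @ [1, 0, 0, 0]) < F (flip ones i @ [1, 0, 0, 0])" if "i < n" for i
  proof -
    have one: "ones ! i = 1" using that by simp
    show ?thesis
      using F_flip_append(2)[OF x that one, of 1 0 0 0] g_diff_less_span[OF x flip_in_cube[OF x that]]
        gadget_monomial_bounds(8)[OF layer_bounds[OF x]] layer_bounds[OF x]
      unfolding gadget_slope_table by linarith
  qed
  moreover have "\<not> F (ones @ [1, 0, 0, 0]) < F (ones @ [0, 0, 0, 0])"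
    "\<not> F (ones @ [1, 0, 0, 0]) < F (ones @ [1, 0, 1, 0])"
    "\<not> F (ones @ [1, 0, 0, 0]) < F (ones @ [1, 0, 0, 1])"
    "F (ones @ [1, 0, 0, 0]) < F (ones @ [1, 1, 0, 0])"
    using arith unfolding F_append[OF x] by (simp_all add: not_less less_imp_le)
  ultimately show ?thesis
    by (subst up_step_append4[OF x]) auto
qed

lemma up_step_layer2:
  assumes x: "x \<in> cube n"
  shows "up_step F (n + 4) (x @ [1, 1, 0, 0]) w \<longleftrightarrow>
    (\<exists>i<n. x ! i = 1 \<and> w = x[i := 0] @ [1, 1, 0, 0]) \<or> (x = zeros \<and> w = zeros @ [1, 1, 1, 0])"
proof -
  note arith = gadget_layer2[OF layer_bounds[OF x]]
  have flip_bounds: "g (flip x i) - g x < M" "g x - g (flip x i) < M" "2 * M \<le> M * int n" if "i < n" for i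
    using g_diff_less_span[OF x flip_in_cube[OF x that]] g_diff_less_span[OF flip_in_cube[OF x that] x]
      gadget_monomial_bounds(5)[OF layer_bounds[OF x]] by simp_all
  have lower_up: "F (x @ [1, 1, 0, 0]) < F (flip x i @ [1, 1, 0, 0])" if "i < n" "x ! i = 1" for i
    using F_flip_append(2)[OF x that, of 1 1 0 0] flip_bounds[OF that(1)]
    unfolding gadget_slope_table by linarith
  have raise_down: "\<not> F (x @ [1, 1, 0, 0]) < F (flip x i @ [1, 1, 0, 0])" if "i < n" "x ! i = 0" for i
    using F_flip_append(1)[OF x that, of 1 1 0 0] flip_bounds[OF that(1)]
    unfolding gadget_slope_table by linarith
  have flip_up: "F (x @ [1, 1, 0, 0]) < F (flip x i @ [1, 1, 0, 0]) \<longleftrightarrow> x ! i = 1" if "i < n" for i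
    using lower_up[OF that] raise_down[OF that] cube_nth_cases[OF x that] by auto
  have lower_up_update: "F (x @ [1, 1, 0, 0]) < F (x[i := 0] @ [1, 1, 0, 0])" if "i < n" "x ! i = 1" for i
    using lower_up[OF that] flip_one[OF that(2)] by simp
  have exit_up: "F (x @ [1, 1, 0, 0]) < F (x @ [1, 1, 1, 0]) \<longleftrightarrow> x = zeros"
    using arith(4) cube_sum_list_eq_0_iff[OF x] unfolding F_append[OF x] by simp
  have "\<not> F (x @ [1, 1, 0, 0]) < F (x @ [0, 1, 0, 0])" "\<not> F (x @ [1, 1, 0, 0]) < F (x @ [1, 0, 0, 0])"
    "\<not> F (x @ [1, 1, 0, 0]) < F (x @ [1, 1, 0, 1])"
    using arith(1-3) unfolding F_append[OF x] by (simp_all add: not_less less_imp_le)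
  then show ?thesis
    using x flip_up lower_up_update exit_up by (subst up_step_append4[OF x]) (auto simp: flip_one)
qed

lemma up_step_layer3:
  "up_step F (n + 4) (zeros @ [1, 1, 1, 0]) w \<longleftrightarrow> w = zeros @ [1, 1, 1, 1]"
proof -
  have x: "zeros \<in> cube n" by (rule replicate_in_cube)
  note arith = gadget_layer3[OF layer_bounds(1,2)[OF x] sum_list_replicate[of n 0, simplified]]
  have "\<not> F (zeros @ [1, 1, 1, 0]) < F (flip zeros i @ [1, 1, 1, 0])" if "i < n" for i
  proof -
    have zero: "zeros ! i = 0" using that by simp
    show ?thesis
      using F_flip_append(1)[OF x that zero, of 1 1 1 0] g_diff_less_span[OF x flip_in_cube[OF x that]]
        gadget_monomial_bounds(5)[OF layer_bounds[OF x]] layer_bounds[OF x]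
      unfolding gadget_slope_table by linarith
  qed
  moreover have "\<not> F (zeros @ [1, 1, 1, 0]) < F (zeros @ [0, 1, 1, 0])"
    "\<not> F (zeros @ [1, 1, 1, 0]) < F (zeros @ [1, 0, 1, 0])"
    "\<not> F (zeros @ [1, 1, 1, 0]) < F (zeros @ [1, 1, 0, 0])"
    "F (zeros @ [1, 1, 1, 0]) < F (zeros @ [1, 1, 1, 1])"
    using arith unfolding F_append[OF x] by (simp_all add: not_less less_imp_le)
  ultimately show ?thesis
    by (subst up_step_append4[OF x]) auto
qed

lemma up_step_layer4:
  assumes x: "x \<in> cube n"
  shows "up_step F (n + 4) (x @ [1, 1, 1, 1]) w \<longleftrightarrow> (\<exists>y. w = y @ [1, 1, 1, 1] \<and> up_step g n x y)"
proof -
  note arith = gadget_layer4[OF layer_bounds[OF x]]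
  have flip_up: "F (x @ [1, 1, 1, 1]) < F (flip x i @ [1, 1, 1, 1]) \<longleftrightarrow> g x < g (flip x i)"
    if "i < n" for i
    using F_flip_append[OF x that, of 1 1 1 1] cube_nth_cases[OF x that]
    unfolding gadget_slope_table by auto
  have "\<not> F (x @ [1, 1, 1, 1]) < F (x @ [0, 1, 1, 1])" "\<not> F (x @ [1, 1, 1, 1]) < F (x @ [1, 0, 1, 1])"
    "\<not> F (x @ [1, 1, 1, 1]) < F (x @ [1, 1, 0, 1])" "\<not> F (x @ [1, 1, 1, 1]) < F (x @ [1, 1, 1, 0])"
    using arith unfolding F_append[OF x] by (simp_all add: not_less less_imp_le)
  then show ?thesis
    using x flip_up by (subst up_step_append4[OF x]) (auto simp: up_step_iff_flip)
qed

section \<open>Maximal increasing paths of f_{n+4}\<close>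

text \<open>The hypothesis on f_n rules out a path that stops in the bottom layer: it would project to
  a maximal increasing path of f_n from 0 ending at a local maximum other than 1.\<close>

lemma maximal_path_through_layer0:
  assumes IH: "\<And>Q. maximal_increasing_path g n Q \<Longrightarrow> hd Q = zeros \<Longrightarrow> last Q = ones"
    and P: "maximal_increasing_path F (n + 4) ((zeros @ [0, 0, 0, 0]) # Q)"
  obtains A Q' where "(zeros @ [0, 0, 0, 0]) # Q = map (\<lambda>x. x @ [0, 0, 0, 0]) A @ (ones @ [1, 0, 0, 0]) # Q'"
    and "increasing_path g n A" "hd A = zeros" "last A = ones"
    and "maximal_increasing_path F (n + 4) ((ones @ [1, 0, 0, 0]) # Q')"
proof -
  have step: "\<forall>x\<in>cube n. \<forall>w. up_step F (n + 4) (x @ [0, 0, 0, 0]) w \<longrightarrow>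
      (\<exists>y\<in>cube n. w = y @ [0, 0, 0, 0] \<and> up_step g n x y) \<or> (x, w) \<in> {(ones, ones @ [1, 0, 0, 0])}"
    using up_step_layer0 by (auto simp: up_step_def)
  from maximal_increasing_path_layer_cases[OF step P replicate_in_cube(1)]
  show ?thesis
  proof (elim disjE exE conjE)
    fix A assume A: "(zeros @ [0, 0, 0, 0]) # Q = map (\<lambda>x. x @ [0, 0, 0, 0]) A" "hd A = zeros"
      "set A \<subseteq> cube n" "successively (up_step g n) A" "local_max F (n + 4) (last A @ [0, 0, 0, 0])"
    have "A \<noteq> []" using A(1) by auto
    have last_A: "last A \<in> cube n" using \<open>A \<noteq> []\<close> A(3) by auto
    have "local_max g n (last A)" and "last A \<noteq> ones"
      using A(5) last_A up_step_layer0[OF last_A] by (auto simp: local_max_iff)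
    moreover have "maximal_increasing_path g n A"
      using \<open>A \<noteq> []\<close> A(3,4) \<open>local_max g n (last A)\<close>
      by (simp add: maximal_increasing_path_def increasing_path_iff_successively)
    ultimately show ?thesis using IH A(2) by blast
  next
    fix A v Q' assume "(zeros @ [0, 0, 0, 0]) # Q = map (\<lambda>x. x @ [0, 0, 0, 0]) A @ v # Q'"
      "A \<noteq> []" "hd A = zeros" "set A \<subseteq> cube n" "successively (up_step g n) A"
      "(last A, v) \<in> {(ones, ones @ [1, 0, 0, 0])}" "maximal_increasing_path F (n + 4) (v # Q')"
    then show ?thesis using that by (simp add: increasing_path_iff_successively)
  qed
qed

lemma not_local_max_layer2:
  assumes x: "x \<in> cube n"
  shows "\<not> local_max F (n + 4) (x @ [1, 1, 0, 0])"
proof (cases "x = zeros")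
  case True
  then have "up_step F (n + 4) (x @ [1, 1, 0, 0]) (zeros @ [1, 1, 1, 0])"
    using up_step_layer2[OF x] by simp
  then show ?thesis by (auto simp: local_max_iff)
next
  case False
  then obtain i where "i < n" "x ! i = 1" using cube_nonzero[OF x] by blast
  then have "up_step F (n + 4) (x @ [1, 1, 0, 0]) (x[i := 0] @ [1, 1, 0, 0])"
    using up_step_layer2[OF x] by blast
  then show ?thesis by (auto simp: local_max_iff)
qed

lemma maximal_path_through_layer2:
  assumes P: "maximal_increasing_path F (n + 4) ((ones @ [1, 1, 0, 0]) # Q)"
  obtains C Q' where "(ones @ [1, 1, 0, 0]) # Q = map (\<lambda>x. x @ [1, 1, 0, 0]) C @ (zeros @ [1, 1, 1, 0]) # Q'"
    and "set C \<subseteq> cube n" "hd C = ones" "last C = zeros" "successively lower_step C" "length C = n + 1"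
    and "maximal_increasing_path F (n + 4) ((zeros @ [1, 1, 1, 0]) # Q')"
proof -
  have step: "\<forall>x\<in>cube n. \<forall>w. up_step F (n + 4) (x @ [1, 1, 0, 0]) w \<longrightarrow>
      (\<exists>y\<in>cube n. w = y @ [1, 1, 0, 0] \<and> lower_step x y) \<or> (x, w) \<in> {(zeros, zeros @ [1, 1, 1, 0])}"
  proof (intro ballI allI impI)
    fix x w assume x: "x \<in> cube n" and "up_step F (n + 4) (x @ [1, 1, 0, 0]) w"
    then consider i where "i < n" "x ! i = 1" "w = x[i := 0] @ [1, 1, 0, 0]"
      | "x = zeros" "w = zeros @ [1, 1, 1, 0]"
      using up_step_layer2[OF x] by blast
    then show "(\<exists>y\<in>cube n. w = y @ [1, 1, 0, 0] \<and> lower_step x y) \<or> (x, w) \<in> {(zeros, zeros @ [1, 1, 1, 0])}"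
    proof cases
      case (1 i)
      then have "x[i := 0] \<in> cube n" "lower_step x (x[i := 0])"
        using flip_in_cube[OF x, of i] flip_one[of x i] length_cube[OF x] by (auto simp: lower_step_def)
      then show ?thesis using 1 by blast
    qed simp
  qed
  from maximal_increasing_path_layer_cases[OF step P replicate_in_cube(2)]
  show ?thesis
  proof (elim disjE exE conjE)
    fix C assume C: "(ones @ [1, 1, 0, 0]) # Q = map (\<lambda>x. x @ [1, 1, 0, 0]) C" "set C \<subseteq> cube n"
      "local_max F (n + 4) (last C @ [1, 1, 0, 0])"
    then have "last C \<in> cube n" by auto
    then show ?thesis using C(3) not_local_max_layer2 by blast
  next
    fix C v Q' assume C: "(ones @ [1, 1, 0, 0]) # Q = map (\<lambda>x. x @ [1, 1, 0, 0]) C @ v # Q'"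
      "C \<noteq> []" "hd C = ones" "set C \<subseteq> cube n" "successively lower_step C"
      "(last C, v) \<in> {(zeros, zeros @ [1, 1, 1, 0])}" "maximal_increasing_path F (n + 4) (v # Q')"
    have "length C = n + 1"
      using sum_list_successively_lower_step[OF C(5,2)] C(2,3,6) by (simp add: sum_list_replicate)
    then show ?thesis using C that by simp
  qed
qed

lemma maximal_path_in_layer4:
  assumes P: "maximal_increasing_path F (n + 4) ((x @ [1, 1, 1, 1]) # Q)" and x: "x \<in> cube n"
  obtains E where "(x @ [1, 1, 1, 1]) # Q = map (\<lambda>x. x @ [1, 1, 1, 1]) E"
    and "maximal_increasing_path g n E" "hd E = x"
proof -
  have step: "\<forall>x\<in>cube n. \<forall>w. up_step F (n + 4) (x @ [1, 1, 1, 1]) w \<longrightarrow>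
      (\<exists>y\<in>cube n. w = y @ [1, 1, 1, 1] \<and> up_step g n x y) \<or> (x, w) \<in> {}"
    using up_step_layer4 by (auto simp: up_step_def)
  from maximal_increasing_path_layer_cases[OF step P x]
  obtain E where E: "(x @ [1, 1, 1, 1]) # Q = map (\<lambda>x. x @ [1, 1, 1, 1]) E" "hd E = x" "set E \<subseteq> cube n"
    "successively (up_step g n) E" "local_max F (n + 4) (last E @ [1, 1, 1, 1])"
    by (elim disjE exE conjE) auto
  then have "E \<noteq> []" "last E \<in> cube n" by auto
  then have "maximal_increasing_path g n E"
    using E(3-5) up_step_layer4
    by (auto simp: maximal_increasing_path_def increasing_path_iff_successively local_max_iff)
  then show ?thesis by (rule that[OF E(1) _ E(2)])
qed

lemma maximal_path_structure:
  assumes IH: "\<And>Q. maximal_increasing_path g n Q \<Longrightarrow> hd Q = zeros \<Longrightarrow> last Q = ones"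
    and P: "maximal_increasing_path F (n + 4) P" and hd_P: "hd P = replicate (n + 4) 0"
  shows "\<exists>A C E.
     P = map (\<lambda>x. x @ [0,0,0,0]) A
         @ [ones @ [1,0,0,0]]
         @ map (\<lambda>x. x @ [1,1,0,0]) C
         @ [zeros @ [1,1,1,0]]
         @ map (\<lambda>x. x @ [1,1,1,1]) E
     \<and> increasing_path g n A \<and> hd A = zeros \<and> last A = ones
     \<and> length C = n + 1 \<and> set C \<subseteq> cube n \<and> hd C = ones \<and> last C = zeros
     \<and> (\<forall>j < n. \<exists>i < n. C ! j ! i = 1 \<and> C ! Suc j = (C ! j)[i := 0])
     \<and> maximal_increasing_path g n E \<and> hd E = zeros"
proof -
  have "P \<noteq> []" using P by (simp add: maximal_increasing_path_def increasing_path_def)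
  moreover have "replicate 4 (0::int) = [0, 0, 0, 0]" by (simp add: numeral_eq_Suc)
  then have "hd P = zeros @ [0, 0, 0, 0]" using hd_P by (simp only: replicate_add)
  ultimately have "P = (zeros @ [0, 0, 0, 0]) # tl P" by (metis list.collapse)
  with P obtain A Q1 where P_eq: "P = map (\<lambda>x. x @ [0, 0, 0, 0]) A @ (ones @ [1, 0, 0, 0]) # Q1"
    and A: "increasing_path g n A" "hd A = zeros" "last A = ones"
    and Q1: "maximal_increasing_path F (n + 4) ((ones @ [1, 0, 0, 0]) # Q1)"
    using maximal_path_through_layer0[OF IH] by metis
  obtain Q2 where Q2: "Q1 = (ones @ [1, 1, 0, 0]) # Q2" "maximal_increasing_path F (n + 4) ((ones @ [1, 1, 0, 0]) # Q2)"
    using maximal_increasing_path_forced_step[OF Q1] up_step_layer1 by blast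
  obtain C Q3 where Q2_eq: "(ones @ [1, 1, 0, 0]) # Q2 = map (\<lambda>x. x @ [1, 1, 0, 0]) C @ (zeros @ [1, 1, 1, 0]) # Q3"
    and C: "set C \<subseteq> cube n" "hd C = ones" "last C = zeros" "successively lower_step C" "length C = n + 1"
    and Q3: "maximal_increasing_path F (n + 4) ((zeros @ [1, 1, 1, 0]) # Q3)"
    using maximal_path_through_layer2[OF Q2(2)] by blast
  obtain Q4 where Q4: "Q3 = (zeros @ [1, 1, 1, 1]) # Q4" "maximal_increasing_path F (n + 4) ((zeros @ [1, 1, 1, 1]) # Q4)"
    using maximal_increasing_path_forced_step[OF Q3] up_step_layer3 by blast
  obtain E where E: "(zeros @ [1, 1, 1, 1]) # Q4 = map (\<lambda>x. x @ [1, 1, 1, 1]) E"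
    "maximal_increasing_path g n E" "hd E = zeros"
    using maximal_path_in_layer4[OF Q4(2) replicate_in_cube(1)] by blast
  have "length (C ! j) = n" if "j < n" for j
    using C(1,5) that nth_mem[of j C] by (simp add: length_cube subset_iff)
  then have "\<forall>j < n. \<exists>i < n. C ! j ! i = 1 \<and> C ! Suc j = (C ! j)[i := 0]"
    using C(4,5) by (simp add: successively_iff_nth lower_step_def)
  then show ?thesis
    using P_eq Q2(1) Q2_eq Q4(1) E A C by (intro exI[of _ A] exI[of _ C] exI[of _ E]) simp
qed

end

lemma local_max_fk0: "local_max (fk 0) 2 v \<Longrightarrow> v = [1, 1]"
proof -
  assume max: "local_max (fk 0) 2 v"
  then have v: "v \<in> cube 2" by (simp add: local_max_def)
  then obtain a b where ab: "v = [a, b]" "a \<in> {0, 1}" "b \<in> {0, 1}"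
    by (cases v rule: remdups_adj.cases) (auto simp: cube_def)
  have no_up: "\<not> fk 0 v < fk 0 (flip v i)" if "i < 2" for i
    using max flip_in_cube[OF v that] adjacent_flip[of i v] that length_cube[OF v]
    by (auto simp: local_max_def)
  from no_up[of 0] no_up[of 1] show "v = [1, 1]"
    using ab by (auto simp: flip_def)
qed

lemma maximal_increasing_path_fk_last:
  "maximal_increasing_path (fk k) (4 * k + 2) P \<Longrightarrow> hd P = replicate (4 * k + 2) 0
    \<Longrightarrow> last P = replicate (4 * k + 2) 1"
proof (induction k arbitrary: P)
  case 0
  then show ?case
    using local_max_fk0 by (simp add: maximal_increasing_path_def numeral_eq_Suc)
next
  case (Suc k)
  interpret fk_step k "4 * k + 2" by unfold_locales (rule refl)
  have dim: "4 * Suc k + 2 = (4 * k + 2) + 4" by simp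
  obtain A C E where
    P: "P = map (\<lambda>x. x @ [0,0,0,0]) A @ [ones @ [1,0,0,0]] @ map (\<lambda>x. x @ [1,1,0,0]) C
          @ [zeros @ [1,1,1,0]] @ map (\<lambda>x. x @ [1,1,1,1]) E"
    and E: "maximal_increasing_path g (4 * k + 2) E" "hd E = zeros"
    using maximal_path_structure[OF Suc.IH Suc.prems[unfolded dim]] by blast
  have "E \<noteq> []" using E(1) by (simp add: maximal_increasing_path_def increasing_path_def)
  then have "last P = ones @ [1, 1, 1, 1]"
    using Suc.IH[OF E] P by (simp add: last_map)
  moreover have "replicate 4 (1::int) = [1, 1, 1, 1]" by (simp add: numeral_eq_Suc)
  ultimately show ?case
    unfolding dim replicate_add by simp
qed

theorem mainTheorem5:
  fixes n :: nat and P :: "int list list"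
  assumes "n mod 4 = 2"
    and "maximal_increasing_path (f (n + 4)) (n + 4) P"
    and "hd P = replicate (n + 4) 0"
  shows "\<exists>A C E.
     P = map (\<lambda>x. x @ [0,0,0,0]) A
         @ [replicate n 1 @ [1,0,0,0]]
         @ map (\<lambda>x. x @ [1,1,0,0]) C
         @ [replicate n 0 @ [1,1,1,0]]
         @ map (\<lambda>x. x @ [1,1,1,1]) E
     \<and> increasing_path (f n) n A \<and> hd A = replicate n 0 \<and> last A = replicate n 1
     \<and> length C = n + 1 \<and> set C \<subseteq> cube n \<and> hd C = replicate n 1 \<and> last C = replicate n 0
     \<and> (\<forall>j < n. \<exists>i < n. C ! j ! i = 1 \<and> C ! Suc j = (C ! j)[i := 0])
     \<and> maximal_increasing_path (f n) n E \<and> hd E = replicate n 0"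
proof -
  define k where "k = n div 4"
  have n: "n = 4 * k + 2" using assms(1) unfolding k_def by presburger
  interpret fk_step k n by unfold_locales (rule n)
  have "f n = g" "f (n + 4) = F" by (simp_all add: f_def n)
  with assms(2,3) show ?thesis
    using maximal_path_structure maximal_increasing_path_fk_last[of k, folded n] by simp
qed

end
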